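(* Let $\mathcal N=(\mathcal L,\mathcal I,D_{\mathcal L})$ be a network with a binary collision profile and character $D^*$. (i) If $S$ is a collision-free framed schedule of frame length $T_F\ge 2D^*+1$ whose rate vector $R_S$ exists, then $R_S\in(1-D^*/T_F)\,\widetilde{\mathcal R}^{(\mathcal L,\mathcal I)}$, and hence $R_S\in\widetilde{\mathcal R}^{(\mathcal L,\mathcal I)}$. (ii) For every $R\in\widetilde{\mathcal R}^{(\mathcal L,\mathcal I)}$ and every $\epsilon>0$ there exist a frame length $T_F$ and a collision-free framed schedule $S$ of frame length $T_F$ whose rate vector exists and satisfies $R_S(l)\ge R(l)-\epsilon$ for all $l\in\mathcal L$.
   Context: A network is a triple $\mathcal N=(\mathcal L,\mathcal I,D_{\mathcal L})$ where $\mathcal L$ is a finite nonempty set of links, each $\mathcal I(l)$ is a collection of nonempty subsets of $\mathcal L$, and $D_{\mathcal L}$ assigns an integer $D_{\mathcal L}(l,l')$ to every pair with $l'\in\phi$ for some $\phi\in\mathcal I(l)$. The profile is binary if every $\phi\in\mathcal I(l)$ is a singleton; then $\mathcal I(l)$ is identified with a subset of $\mathcal L$. The character is $D^*=\max_{l}\max_{\phi\in\mathcal I(l)}\max_{l'\in\phi}|D_{\mathcal L}(l,l')|$ (0 if there are no collision sets). A schedule is a map $S:\mathcal L\times\mathbb Z\to\{0,1\}$; $S(l,t)$ has a collision if there is $\phi\in\mathcal I(l)$ with $S(l',t+D_{\mathcal L}(l,l'))=1$ for all $l'\in\phi$; $S$ is collision free if no $(l,t)$ with $S(l,t)=1$ has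 a collision. $R_S(l)=\lim_{T\to\infty}\frac1T\sum_{t=0}^{T-1}\iota\big(S(l,t)=1\text{ and collision free}\big)$ when the limit exists; $R_S=(R_S(l))_l$ is the rate vector when all limits exist. For an integer $T_F\ge D^*+1$, a framed schedule of frame length $T_F$ is a schedule $S$ with $S(l,t)=0$ for $t<0$, such that for every $k\ge0$ and every $l$: $S(l,kT_F+i)=0$ for $i=T_F-D^*,\dots,T_F-1$, and the values $S(l,kT_F+i)$, $i=0,\dots,T_F-D^*-1$, are all equal. An independent set of $(\mathcal L,\mathcal I)$ is a subset $A\subseteq\mathcal L$ such that there are no $l\in A$ and $\phi\in\mathcal I(l)$ with $\phi\subseteq A$; $\widetilde{\mathcal R}^{(\mathcal L,\mathcal I)}\subseteq\mathbb R^{\mathcal L}$ is the convex hull of the indicator vectors of all independent sets of $(\mathcal L,\mathcal I)$. *)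

theory Defs
  imports "HOL-Analysis.Analysis"
begin

text \<open>The link set is modelled by a finite type 'l (nonempty automatically).
  A collision profile is I :: 'l \<Rightarrow> 'l set set, delays D :: 'l \<Rightarrow> 'l \<Rightarrow> int
  (only relevant on pairs (l,l') with l' in some collision set of l).
  A schedule is S :: 'l \<Rightarrow> int \<Rightarrow> bool (True = 1, False = 0).\<close>

definition collision_sets_nonempty :: "('l \<Rightarrow> 'l set set) \<Rightarrow> bool" where
  "collision_sets_nonempty I \<longleftrightarrow> (\<forall>l. \<forall>\<phi>\<in>I l. \<phi> \<noteq> {})"

definition binary_profile :: "('l \<Rightarrow> 'l set set) \<Rightarrow> bool" where
  "binary_profile I \<longleftrightarrow> (\<forall>l. \<forall>\<phi>\<in>I l. \<exists>l'. \<phi> = {l'})"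

definition character :: "('l \<Rightarrow> 'l set set) \<Rightarrow> ('l \<Rightarrow> 'l \<Rightarrow> int) \<Rightarrow> nat" where
  "character I D = nat (Max (insert 0 {\<bar>D l l'\<bar> | l \<phi> l'. \<phi> \<in> I l \<and> l' \<in> \<phi>}))"

definition has_collision ::
  "('l \<Rightarrow> 'l set set) \<Rightarrow> ('l \<Rightarrow> 'l \<Rightarrow> int) \<Rightarrow> ('l \<Rightarrow> int \<Rightarrow> bool) \<Rightarrow> 'l \<Rightarrow> int \<Rightarrow> bool" where
  "has_collision I D S l t \<longleftrightarrow> (\<exists>\<phi>\<in>I l. \<forall>l'\<in>\<phi>. S l' (t + D l l'))"

definition collision_free ::
  "('l \<Rightarrow> 'l set set) \<Rightarrow> ('l \<Rightarrow> 'l \<Rightarrow> int) \<Rightarrow> ('l \<Rightarrow> int \<Rightarrow> bool) \<Rightarrow> bool" where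
  "collision_free I D S \<longleftrightarrow> (\<forall>l t. S l t \<longrightarrow> \<not> has_collision I D S l t)"

definition avg_success ::
  "('l \<Rightarrow> 'l set set) \<Rightarrow> ('l \<Rightarrow> 'l \<Rightarrow> int) \<Rightarrow> ('l \<Rightarrow> int \<Rightarrow> bool) \<Rightarrow> 'l \<Rightarrow> nat \<Rightarrow> real" where
  "avg_success I D S l T =
     (\<Sum>t<T. if S l (int t) \<and> \<not> has_collision I D S l (int t) then 1 else 0) / real T"

definition rate_exists ::
  "('l \<Rightarrow> 'l set set) \<Rightarrow> ('l \<Rightarrow> 'l \<Rightarrow> int) \<Rightarrow> ('l \<Rightarrow> int \<Rightarrow> bool) \<Rightarrow> bool" where
  "rate_exists I D S \<longleftrightarrow> (\<forall>l. convergent (avg_success I D S l))"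

definition rate_vector ::
  "('l \<Rightarrow> 'l set set) \<Rightarrow> ('l \<Rightarrow> 'l \<Rightarrow> int) \<Rightarrow> ('l \<Rightarrow> int \<Rightarrow> bool) \<Rightarrow> real ^ 'l" where
  "rate_vector I D S = (\<chi> l. lim (avg_success I D S l))"

definition framed_schedule ::
  "('l \<Rightarrow> 'l set set) \<Rightarrow> ('l \<Rightarrow> 'l \<Rightarrow> int) \<Rightarrow> nat \<Rightarrow> ('l \<Rightarrow> int \<Rightarrow> bool) \<Rightarrow> bool" where
  "framed_schedule I D TF S \<longleftrightarrow>
     TF \<ge> character I D + 1 \<and>
     (\<forall>l t. t < 0 \<longrightarrow> \<not> S l t) \<and>
     (\<forall>k::nat. \<forall>l.
        (\<forall>i::nat. TF - character I D \<le> i \<and> i < TF \<longrightarrow> \<not> S l (int k * int TF + int i)) \<and>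
        (\<forall>i::nat. i < TF - character I D \<longrightarrow> S l (int k * int TF + int i) = S l (int k * int TF)))"

definition independent_set :: "('l \<Rightarrow> 'l set set) \<Rightarrow> 'l set \<Rightarrow> bool" where
  "independent_set I A \<longleftrightarrow> \<not> (\<exists>l\<in>A. \<exists>\<phi>\<in>I l. \<phi> \<subseteq> A)"

definition indicator_vec :: "'l set \<Rightarrow> real ^ 'l" where
  "indicator_vec A = (\<chi> l. if l \<in> A then 1 else 0)"

definition rate_region :: "('l::finite \<Rightarrow> 'l set set) \<Rightarrow> (real ^ 'l) set" where
  "rate_region I = convex hull {indicator_vec A | A. independent_set I A}"

end

theory Submission
  imports Defs
begin

(* (i) A framed schedule transmits a fixed set of links during the first T_F - D* slots of
   each frame. If T_F >= 2 D* + 1, a collision partner of a transmission at a frame start lies,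
   after shifting by at most D* in the appropriate direction, still inside the active part of the
   same frame; so collision freedom forces every frame's set to be independent. Over K whole frames
   the empirical rate is (1 - D*/T_F) times the average of K independent-set indicators, a point of
   the compact convex rate region; its limit stays there, and so does its scaling by a factor in
   [0,1], since 0 belongs to the region.
   (ii) Round the barycentric weights of R down to multiples of 1/N, list the independent sets with
   these multiplicities (padded with the empty set) as N consecutive frames of length (D*+1) N and
   repeat this block forever. Within such a schedule all collision partners of a transmission lie in
   its own frame, so the schedule is collision free, and its rate is below R by at most
   (2^|L| + 1)/N. *)

lemma sum_lessThan_add:
  fixes f :: "nat \<Rightarrow> 'a::comm_monoid_add"
  shows "(\<Sum>t<a + b. f t) = (\<Sum>t<a. f t) + (\<Sum>t<b. f (a + t))"
  by (induction b) (simp_all add: add.assoc)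

lemma sum_lessThan_periodic:
  fixes f :: "nat \<Rightarrow> real"
  assumes periodic: "\<And>t. f (t + P) = f t"
  shows "(\<Sum>t<q * P + r. f t) = real q * (\<Sum>t<P. f t) + (\<Sum>t<r. f t)"
proof (induction q)
  case (Suc q)
  have "(\<Sum>t<Suc q * P + r. f t) = (\<Sum>t<P. f t) + (\<Sum>t<q * P + r. f (P + t))"
    using sum_lessThan_add[of f P "q * P + r"] by (simp add: add.assoc)
  also have "(\<Sum>t<q * P + r. f (P + t)) = (\<Sum>t<q * P + r. f t)"
    using periodic by (simp add: add.commute)
  finally show ?case
    using Suc by (simp add: algebra_simps)
qed simp

lemma periodic_partial_sum_bound:
  fixes f :: "nat \<Rightarrow> real"
  assumes periodic: "\<And>t. f (t + P) = f t" and "P > 0"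
  shows "\<bar>(\<Sum>t<T. f t) - real T / real P * (\<Sum>t<P. f t)\<bar> \<le> 2 * (\<Sum>t<P. \<bar>f t\<bar>)"
proof -
  define s B where "s = (\<Sum>t<P. f t)" and "B = (\<Sum>t<P. \<bar>f t\<bar>)"
  define q r where "q = T div P" and "r = T mod P"
  have T: "T = q * P + r" and "r < P"
    using \<open>P > 0\<close> by (simp_all add: q_def r_def)
  have "(\<Sum>t<T. f t) - real T / real P * s = (\<Sum>t<r. f t) - real r / real P * s"
    using sum_lessThan_periodic[of f P q r] periodic \<open>P > 0\<close>
    unfolding T s_def by (simp add: field_simps)
  moreover have "\<bar>\<Sum>t<r. f t\<bar> \<le> B"
  proof -
    have "(\<Sum>t<r. \<bar>f t\<bar>) \<le> B"
      unfolding B_def using \<open>r < P\<close> by (intro sum_mono2) auto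
    then show ?thesis
      using sum_abs[of f "{..<r}"] by linarith
  qed
  moreover have "\<bar>real r / real P * s\<bar> \<le> B"
  proof -
    have "\<bar>real r / real P * s\<bar> \<le> 1 * \<bar>s\<bar>"
      unfolding abs_mult using \<open>r < P\<close> by (intro mult_right_mono) auto
    then show ?thesis
      using sum_abs[of f "{..<P}"] unfolding s_def B_def by linarith
  qed
  ultimately show ?thesis
    unfolding s_def B_def by (smt (verit) abs_triangle_ineq4)
qed

lemma periodic_average_tendsto:
  fixes f :: "nat \<Rightarrow> real"
  assumes periodic: "\<And>t. f (t + P) = f t" and "P > 0"
  shows "(\<lambda>T. (\<Sum>t<T. f t) / real T) \<longlonglongrightarrow> (\<Sum>t<P. f t) / real P"
proof -
  define B where "B = (\<Sum>t<P. \<bar>f t\<bar>)"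
  have "(\<lambda>T. (\<Sum>t<T. f t) / real T - (\<Sum>t<P. f t) / real P) \<longlonglongrightarrow> 0"
  proof (rule Lim_null_comparison)
    show "\<forall>\<^sub>F T in sequentially.
        norm ((\<Sum>t<T. f t) / real T - (\<Sum>t<P. f t) / real P) \<le> 2 * B / real T"
    proof (rule eventually_sequentiallyI)
      fix T :: nat
      assume "1 \<le> T"
      then have "(\<Sum>t<T. f t) / real T - (\<Sum>t<P. f t) / real P
          = ((\<Sum>t<T. f t) - real T / real P * (\<Sum>t<P. f t)) / real T"
        by (simp add: field_simps)
      then show "norm ((\<Sum>t<T. f t) / real T - (\<Sum>t<P. f t) / real P) \<le> 2 * B / real T"
        using periodic_partial_sum_bound[of f P T] assms \<open>1 \<le> T\<close>
        unfolding B_def by (simp add: divide_right_mono)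
    qed
    show "(\<lambda>T. 2 * B / real T) \<longlonglongrightarrow> 0"
      by (rule lim_const_over_n)
  qed
  then show ?thesis
    by (simp add: LIM_zero_iff)
qed

lemma div_add_eq_if_mod_add_less:
  fixes a b c :: nat
  assumes "a mod c + b < c"
  shows "(a + b) div c = a div c"
  using assms div_add1_eq[of a b c] by simp

lemma convex_hull_rounded_weights:
  fixes V :: "(real ^ 'l::finite) set"
  assumes "finite V" and "R \<in> convex hull V"
    and unit: "\<And>x l. x \<in> V \<Longrightarrow> 0 \<le> x $ l \<and> x $ l \<le> 1"
  obtains m :: "real ^ 'l \<Rightarrow> nat"
  where "(\<Sum>x\<in>V. m x) \<le> N"
    and "\<And>l. real N * R $ l - real (card V) \<le> (\<Sum>x\<in>V. real (m x) * x $ l)"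
proof -
  obtain u where u0: "\<forall>x\<in>V. 0 \<le> u x" and u1: "sum u V = 1" and uR: "(\<Sum>x\<in>V. u x *\<^sub>R x) = R"
    using assms(2) unfolding convex_hull_finite[OF \<open>finite V\<close>] by blast
  define m where "m x = nat \<lfloor>real N * u x\<rfloor>" for x
  have m_le: "real (m x) \<le> real N * u x" and m_ge: "real N * u x - 1 \<le> real (m x)"
    if "x \<in> V" for x
    using u0 that unfolding m_def by simp_all
  have "real (\<Sum>x\<in>V. m x) \<le> (\<Sum>x\<in>V. real N * u x)"
    unfolding of_nat_sum by (intro sum_mono m_le)
  also have "\<dots> = real N"
    using u1 by (simp flip: sum_distrib_left)
  finally have "(\<Sum>x\<in>V. m x) \<le> N"
    by (simp only: of_nat_le_iff)
  moreover have "real N * R $ l - real (card V) \<le> (\<Sum>x\<in>V. real (m x) * x $ l)" for l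
  proof -
    have "real N * R $ l - real (card V) = (\<Sum>x\<in>V. (real N * u x) * x $ l - 1)"
      unfolding uR[symmetric] using \<open>finite V\<close>
      by (simp add: sum_subtractf sum_distrib_left mult.assoc)
    also have "\<dots> \<le> (\<Sum>x\<in>V. real (m x) * x $ l)"
    proof (rule sum_mono)
      fix x
      assume "x \<in> V"
      then have "(real N * u x) * x $ l \<le> (real (m x) + 1) * x $ l"
        using m_ge unit by (intro mult_right_mono) fastforce+
      then show "(real N * u x) * x $ l - 1 \<le> real (m x) * x $ l"
        using unit[OF \<open>x \<in> V\<close>, of l] by (simp add: algebra_simps)
    qed
    finally show ?thesis .
  qed
  ultimately show ?thesis
    by (rule that)
qed

lemma enumerate_multiplicities:
  fixes V :: "(real ^ 'l) set"
  assumes "finite V" and "x\<^sub>0 \<in> V" and nonneg: "\<And>x l. x \<in> V \<Longrightarrow> 0 \<le> x $ l"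
    and "(\<Sum>x\<in>V. m x) \<le> N"
  obtains F :: "nat \<Rightarrow> real ^ 'l"
  where "\<And>r. F r \<in> V" and "\<And>l. (\<Sum>x\<in>V. real (m x) * x $ l) \<le> (\<Sum>r<N. F r $ l)"
proof -
  define P where "P = Sigma V (\<lambda>x. {..<m x})"
  have "finite P"
    unfolding P_def using \<open>finite V\<close> by auto
  moreover have "card P \<le> card {..<N}"
    unfolding P_def using \<open>finite V\<close> assms(4) by (simp add: card_SigmaI)
  ultimately obtain g where g: "g ` P \<subseteq> {..<N}" and "inj_on g P"
    using card_le_inj[of P "{..<N}"] by blast
  define F where "F r = (if r \<in> g ` P then fst (inv_into P g r) else x\<^sub>0)" for r
  have F_V: "F r \<in> V" for r
    using inv_into_into[of r g P] \<open>x\<^sub>0 \<in> V\<close> unfolding F_def P_def by auto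
  have "(\<Sum>x\<in>V. real (m x) * x $ l) \<le> (\<Sum>r<N. F r $ l)" for l
  proof -
    have "(\<Sum>x\<in>V. real (m x) * x $ l) = (\<Sum>x\<in>V. \<Sum>k<m x. x $ l)"
      by simp
    also have "\<dots> = (\<Sum>(x, k)\<in>P. x $ l)"
      unfolding P_def using \<open>finite V\<close> by (intro sum.Sigma) auto
    also have "\<dots> = (\<Sum>p\<in>P. F (g p) $ l)"
      using \<open>inj_on g P\<close> unfolding F_def by (intro sum.cong) auto
    also have "\<dots> = (\<Sum>r\<in>g ` P. F r $ l)"
      using sum.reindex[OF \<open>inj_on g P\<close>, of "\<lambda>r. F r $ l"] by simp
    also have "\<dots> \<le> (\<Sum>r<N. F r $ l)"
      using g F_V nonneg by (intro sum_mono2) auto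
    finally show ?thesis .
  qed
  with F_V show ?thesis
    by (rule that)
qed

lemma indicator_vec_nth [simp]: "indicator_vec A $ l = (if l \<in> A then 1 else 0)"
  unfolding indicator_vec_def by simp

lemma indicator_vec_empty [simp]: "indicator_vec {} = 0"
  by (simp add: vec_eq_iff)

lemma independent_set_empty [simp]: "independent_set I {}"
  unfolding independent_set_def by simp

lemma indicator_vec_in_rate_region:
  "independent_set I A \<Longrightarrow> indicator_vec A \<in> rate_region I"
  unfolding rate_region_def by (intro hull_inc) blast

lemma convex_rate_region: "convex (rate_region I)"
  unfolding rate_region_def by simp

lemma closed_rate_region: "closed (rate_region I)"
proof -
  have "finite {indicator_vec A :: real ^ 'a | A. independent_set I A}"
    by simp
  then show ?thesis
    unfolding rate_region_def by (intro compact_imp_closed finite_imp_compact_convex_hull)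
qed

lemma zero_in_rate_region: "0 \<in> rate_region I"
  using indicator_vec_in_rate_region[OF independent_set_empty] by simp

lemma scaleR_in_rate_region:
  assumes "x \<in> rate_region I" "0 \<le> c" "c \<le> 1"
  shows "c *\<^sub>R x \<in> rate_region I"
  using convexD[OF convex_rate_region assms(1) zero_in_rate_region, of c "1 - c"] assms(2,3)
  by simp

lemma average_in_rate_region:
  assumes "\<And>k. k < K \<Longrightarrow> independent_set I (A k)"
  shows "(1 / real K) *\<^sub>R (\<Sum>k<K. indicator_vec (A k)) \<in> rate_region I"
proof (cases "K = 0")
  case False
  have "(\<Sum>k<K. (1 / real K) *\<^sub>R indicator_vec (A k)) \<in> rate_region I"
    using False assms
    by (intro convex_sum[OF _ convex_rate_region]) (auto intro: indicator_vec_in_rate_region)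
  then show ?thesis
    by (simp add: scaleR_sum_right)
qed (simp add: zero_in_rate_region)

lemma character_bound:
  fixes I :: "'l::finite \<Rightarrow> 'l set set"
  assumes "\<phi> \<in> I l" "l' \<in> \<phi>"
  shows "\<bar>D l l'\<bar> \<le> int (character I D)"
proof -
  let ?M = "{\<bar>D l l'\<bar> | l \<phi> l'. \<phi> \<in> I l \<and> l' \<in> \<phi>}"
  have "?M \<subseteq> range (\<lambda>(l, l'). \<bar>D l l'\<bar>)"
    by auto
  then have "finite (insert 0 ?M)"
    by (simp add: finite_subset)
  then have "\<bar>D l l'\<bar> \<le> Max (insert 0 ?M)"
    using assms by (intro Max_ge) auto
  then show ?thesis
    unfolding character_def by linarith
qed

lemma framed_schedule_guard:
  assumes "framed_schedule I D TF S" "TF - character I D \<le> i" "i < TF"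
  shows "\<not> S l (int (k * TF + i))"
  using assms unfolding framed_schedule_def by auto

lemma framed_schedule_frame_const:
  assumes "framed_schedule I D TF S" "i < TF - character I D"
  shows "S l (int (k * TF + i)) = S l (int (k * TF))"
  using assms unfolding framed_schedule_def by auto

lemma framed_schedule_count_frame:
  assumes fr: "framed_schedule I D TF S"
  shows "(\<Sum>i<TF. if S l (int (k * TF + i)) then 1 else 0 :: real)
       = real (TF - character I D) * (if S l (int (k * TF)) then 1 else 0)"
proof -
  let ?d = "character I D"
  let ?g = "\<lambda>i. if S l (int (k * TF + i)) then 1 else 0 :: real"
  have split: "TF - ?d + ?d = TF"
    using fr unfolding framed_schedule_def by simp
  then have "(\<Sum>i<TF. ?g i) = (\<Sum>i<TF - ?d. ?g i) + (\<Sum>i<?d. ?g (TF - ?d + i))"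
    using sum_lessThan_add[of ?g "TF - ?d" ?d] by simp
  also have "(\<Sum>i<TF - ?d. ?g i) = (\<Sum>i<TF - ?d. if S l (int (k * TF)) then 1 else 0)"
    using framed_schedule_frame_const[OF fr] by (intro sum.cong) auto
  also have "(\<Sum>i<?d. ?g (TF - ?d + i)) = 0"
  proof (intro sum.neutral ballI)
    fix i
    assume "i \<in> {..<?d}"
    then have "\<not> S l (int (k * TF + (TF - ?d + i)))"
      using split by (intro framed_schedule_guard[OF fr]) auto
    then show "?g (TF - ?d + i) = 0"
      by (simp only: if_False)
  qed
  finally show ?thesis
    by simp
qed

lemma framed_schedule_count:
  assumes fr: "framed_schedule I D TF S"
  shows "(\<Sum>t<K * TF. if S l (int t) then 1 else 0 :: real)
       = real (TF - character I D) * (\<Sum>k<K. if S l (int (k * TF)) then 1 else 0)"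
proof (induction K)
  case (Suc K)
  have "(\<Sum>t<Suc K * TF. if S l (int t) then 1 else 0 :: real)
      = (\<Sum>t<K * TF. if S l (int t) then 1 else 0)
      + (\<Sum>i<TF. if S l (int (K * TF + i)) then 1 else 0)"
    using sum_lessThan_add[of "\<lambda>t. if S l (int t) then 1 else 0 :: real" "K * TF" TF]
    by (simp add: add.commute)
  then show ?case
    using Suc framed_schedule_count_frame[OF fr, of l K] by (simp add: distrib_left)
qed simp

lemma avg_success_collision_free:
  assumes "collision_free I D S"
  shows "avg_success I D S l T = (\<Sum>t<T. if S l (int t) then 1 else 0) / real T"
proof -
  have "(\<Sum>t<T. if S l (int t) \<and> \<not> has_collision I D S l (int t) then 1 else 0 :: real)
      = (\<Sum>t<T. if S l (int t) then 1 else 0)"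
    using assms unfolding collision_free_def by (intro sum.cong) auto
  then show ?thesis
    unfolding avg_success_def by simp
qed

definition frame_average :: "nat \<Rightarrow> ('l \<Rightarrow> int \<Rightarrow> bool) \<Rightarrow> nat \<Rightarrow> real ^ 'l" where
  "frame_average TF S K = (1 / real K) *\<^sub>R (\<Sum>k<K. indicator_vec {l. S l (int (k * TF))})"

lemma frame_average_nth:
  "frame_average TF S K $ l = (\<Sum>k<K. if S l (int (k * TF)) then 1 else 0) / real K"
  unfolding frame_average_def by (simp add: sum_divide_distrib)

lemma avg_success_frames:
  assumes fr: "framed_schedule I D TF S" and cf: "collision_free I D S"
  shows "avg_success I D S l (K * TF)
       = (1 - real (character I D) / real TF) * frame_average TF S K $ l"
proof -
  define n where "n = (\<Sum>k<K. if S l (int (k * TF)) then 1 else 0 :: real)"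
  have "character I D < TF"
    using fr unfolding framed_schedule_def by simp
  then have "real (TF - character I D) * n / real (K * TF)
      = (1 - real (character I D) / real TF) * (n / real K)"
    by (simp add: of_nat_diff field_simps)
  then show ?thesis
    unfolding avg_success_collision_free[OF cf] framed_schedule_count[OF fr] frame_average_nth n_def .
qed

lemma frame_independent:
  fixes I :: "'l::finite \<Rightarrow> 'l set set"
  assumes bin: "binary_profile I" and fr: "framed_schedule I D TF S"
    and long: "2 * character I D + 1 \<le> TF" and cf: "collision_free I D S"
  shows "independent_set I {l. S l (int (k * TF))}"
  unfolding independent_set_def
proof (intro notI, elim bexE)
  fix l \<phi>
  assume l: "l \<in> {l. S l (int (k * TF))}" and \<phi>: "\<phi> \<in> I l"
    and active: "\<phi> \<subseteq> {l. S l (int (k * TF))}"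
  obtain l' where l': "\<phi> = {l'}"
    using bin \<phi> unfolding binary_profile_def by blast
  let ?e = "D l l'"
  have e: "nat \<bar>?e\<bar> < TF - character I D"
    using character_bound[of \<phi> I l l' D] \<phi> l' long by simp
  have "S l' (int (k * TF))" "S l (int (k * TF))"
    using active l l' by auto
  then have "S l' (int (k * TF + nat \<bar>?e\<bar>))" "S l (int (k * TF + nat \<bar>?e\<bar>))"
    using framed_schedule_frame_const[OF fr e] by auto
  then show False
  proof (cases "?e \<ge> 0")
    case True
    then have "has_collision I D S l (int (k * TF))"
      using \<open>S l' (int (k * TF + nat \<bar>?e\<bar>))\<close> \<phi> l' unfolding has_collision_def by auto
    then show False
      using cf \<open>S l (int (k * TF))\<close> unfolding collision_free_def by blast
  next
    case False
    then have "has_collision I D S l (int (k * TF + nat \<bar>?e\<bar>))"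
      using \<open>S l' (int (k * TF))\<close> \<phi> l' unfolding has_collision_def
      by (auto intro!: bexI[of _ "{l'}"])
    then show False
      using cf \<open>S l (int (k * TF + nat \<bar>?e\<bar>))\<close> unfolding collision_free_def by blast
  qed
qed

lemma rate_vector_framed_schedule:
  fixes I :: "'l::finite \<Rightarrow> 'l set set"
  assumes bin: "binary_profile I" and fr: "framed_schedule I D TF S"
    and long: "2 * character I D + 1 \<le> TF" and cf: "collision_free I D S"
    and re: "rate_exists I D S"
  shows "\<exists>W \<in> rate_region I. rate_vector I D S = (1 - real (character I D) / real TF) *\<^sub>R W"
proof -
  define c where "c = 1 - real (character I D) / real TF"
  have "c > 0"
    using long unfolding c_def by (simp add: field_simps)
  have "(\<lambda>K. frame_average TF S K $ l) \<longlonglongrightarrow> rate_vector I D S $ l / c" for l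
  proof -
    have "avg_success I D S l \<longlonglongrightarrow> rate_vector I D S $ l"
      using re unfolding rate_exists_def rate_vector_def by (simp add: convergent_LIMSEQ_iff)
    moreover have "strict_mono (\<lambda>K. K * TF)"
      using long by (intro strict_monoI) simp
    ultimately have "(\<lambda>K. avg_success I D S l (K * TF)) \<longlonglongrightarrow> rate_vector I D S $ l"
      using LIMSEQ_subseq_LIMSEQ by (fastforce simp: o_def)
    then have "(\<lambda>K. avg_success I D S l (K * TF) / c) \<longlonglongrightarrow> rate_vector I D S $ l / c"
      using \<open>c > 0\<close> by (intro tendsto_divide tendsto_const) auto
    moreover have "avg_success I D S l (K * TF) / c = frame_average TF S K $ l" for K
      unfolding avg_success_frames[OF fr cf] c_def[symmetric] using \<open>c > 0\<close> by simp
    ultimately show ?thesis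
      by simp
  qed
  then have "frame_average TF S \<longlonglongrightarrow> (1 / c) *\<^sub>R rate_vector I D S"
    by (intro vec_tendstoI) (simp add: divide_inverse_commute)
  moreover have "frame_average TF S K \<in> rate_region I" for K
    unfolding frame_average_def
    by (intro average_in_rate_region frame_independent[OF bin fr long cf])
  ultimately have "(1 / c) *\<^sub>R rate_vector I D S \<in> rate_region I"
    using closed_sequentially[OF closed_rate_region] by blast
  moreover have "rate_vector I D S = c *\<^sub>R ((1 / c) *\<^sub>R rate_vector I D S)"
    using \<open>c > 0\<close> by simp
  ultimately show ?thesis
    unfolding c_def by blast
qed

definition cyclic_schedule :: "nat \<Rightarrow> nat \<Rightarrow> nat \<Rightarrow> (nat \<Rightarrow> 'l set) \<Rightarrow> 'l \<Rightarrow> int \<Rightarrow> bool" where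
  "cyclic_schedule TF d N A l t \<longleftrightarrow> 0 \<le> t \<and> nat t mod TF < TF - d \<and> l \<in> A (nat t div TF mod N)"

lemma cyclic_schedule_int [simp]:
  "cyclic_schedule TF d N A l (int n) \<longleftrightarrow> n mod TF < TF - d \<and> l \<in> A (n div TF mod N)"
  unfolding cyclic_schedule_def by simp

lemma cyclic_schedule_frame_slot:
  assumes "i < TF"
  shows "cyclic_schedule TF d N A l (int k * int TF + int i) \<longleftrightarrow> i < TF - d \<and> l \<in> A (k mod N)"
proof -
  have "int k * int TF + int i = int (k * TF + i)"
    by simp
  moreover have "(k * TF + i) mod TF = i" and "(k * TF + i) div TF = k"
    using assms by simp_all
  ultimately show ?thesis
    by (simp only: cyclic_schedule_int)
qed

lemma framed_cyclic_schedule: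
  assumes "character I D + 1 \<le> TF"
  shows "framed_schedule I D TF (cyclic_schedule TF (character I D) N A)"
proof -
  have "cyclic_schedule TF (character I D) N A l (int k * int TF) \<longleftrightarrow> l \<in> A (k mod N)" for l k
    using assms cyclic_schedule_frame_slot[of 0 TF "character I D" N A l k] by simp
  moreover have "\<not> cyclic_schedule TF d N A l t" if "t < 0" for d l t
    using that unfolding cyclic_schedule_def by simp
  ultimately show ?thesis
    using assms cyclic_schedule_frame_slot[of _ TF "character I D" N A]
    unfolding framed_schedule_def by auto
qed

lemma same_frame_if_close:
  fixes n m d TF :: nat
  assumes "n mod TF < TF - d" "m mod TF < TF - d" "\<bar>int m - int n\<bar> \<le> int d"
  shows "m div TF = n div TF"
proof (cases "n \<le> m")
  case True
  then have "n mod TF + (m - n) < TF"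
    using assms(1,3) by linarith
  then have "(n + (m - n)) div TF = n div TF"
    by (rule div_add_eq_if_mod_add_less)
  then show ?thesis
    using True by simp
next
  case False
  then have "m mod TF + (n - m) < TF"
    using assms(2,3) by linarith
  then have "(m + (n - m)) div TF = m div TF"
    by (rule div_add_eq_if_mod_add_less)
  then show ?thesis
    using False by simp
qed

lemma collision_free_cyclic_schedule:
  fixes I :: "'l::finite \<Rightarrow> 'l set set"
  assumes indep: "\<And>r. independent_set I (A r)"
  shows "collision_free I D (cyclic_schedule TF (character I D) N A)"
  unfolding collision_free_def has_collision_def
proof (intro allI impI notI, elim bexE)
  let ?S = "cyclic_schedule TF (character I D) N A"
  fix l t \<phi>
  assume "?S l t" and "\<phi> \<in> I l" and partners: "\<forall>l'\<in>\<phi>. ?S l' (t + D l l')"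
  then obtain n where n: "t = int n"
    unfolding cyclic_schedule_def using nonneg_eq_int by blast
  let ?k = "n div TF mod N"
  have "\<phi> \<subseteq> A ?k"
  proof
    fix l'
    assume "l' \<in> \<phi>"
    then have "?S l' (t + D l l')"
      using partners by blast
    then obtain m where m: "t + D l l' = int m"
      unfolding cyclic_schedule_def using nonneg_eq_int by blast
    have "\<bar>int m - int n\<bar> \<le> int (character I D)"
      using character_bound[of \<phi> I l l' D] \<open>\<phi> \<in> I l\<close> \<open>l' \<in> \<phi>\<close> m n by simp
    then have "m div TF = n div TF"
      using \<open>?S l t\<close> \<open>?S l' (t + D l l')\<close> m n by (intro same_frame_if_close) simp_all
    then show "l' \<in> A ?k"
      using \<open>?S l' (t + D l l')\<close> m by simp
  qed
  moreover have "l \<in> A ?k"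
    using \<open>?S l t\<close> n by simp
  ultimately show False
    using indep[of ?k] \<open>\<phi> \<in> I l\<close> unfolding independent_set_def by blast
qed

lemma rate_vector_eqI:
  assumes "\<And>l. avg_success I D S l \<longlonglongrightarrow> r $ l"
  shows "rate_exists I D S \<and> rate_vector I D S = r"
  using assms limI unfolding rate_exists_def rate_vector_def convergent_def
  by (auto simp: vec_eq_iff)

lemma rate_vector_cyclic_schedule:
  fixes I :: "'l::finite \<Rightarrow> 'l set set"
  assumes indep: "\<And>r. independent_set I (A r)" and "N > 0" and TF: "character I D + 1 \<le> TF"
  defines "S \<equiv> cyclic_schedule TF (character I D) N A"
  shows "rate_exists I D S
    \<and> rate_vector I D S = (1 - real (character I D) / real TF) *\<^sub>R
                            ((1 / real N) *\<^sub>R (\<Sum>r<N. indicator_vec (A r)))"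
proof (rule rate_vector_eqI)
  fix l
  have fr: "framed_schedule I D TF S"
    unfolding S_def by (rule framed_cyclic_schedule[OF TF])
  have cf: "collision_free I D S"
    unfolding S_def by (rule collision_free_cyclic_schedule[OF indep])
  define f where "f t = (if S l (int t) then 1 else 0 :: real)" for t
  have "f (t + N * TF) = f t" for t
  proof -
    have "(t + N * TF) div TF = t div TF + N"
      using TF by simp
    then show ?thesis
      unfolding f_def S_def cyclic_schedule_int by simp
  qed
  then have lim: "(\<lambda>T. (\<Sum>t<T. f t) / real T) \<longlonglongrightarrow> (\<Sum>t<N * TF. f t) / real (N * TF)"
    using \<open>N > 0\<close> TF by (intro periodic_average_tendsto) simp_all
  have avg: "avg_success I D S l = (\<lambda>T. (\<Sum>t<T. f t) / real T)"
    unfolding f_def avg_success_collision_free[OF cf] ..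
  have "avg_success I D S l \<longlonglongrightarrow> avg_success I D S l (N * TF)"
    unfolding avg by (rule lim)
  moreover have "frame_average TF S N = (1 / real N) *\<^sub>R (\<Sum>r<N. indicator_vec (A r))"
    unfolding frame_average_def S_def cyclic_schedule_int
    using TF by (intro arg_cong[where f = "scaleR _"] sum.cong) auto
  ultimately show "avg_success I D S l \<longlonglongrightarrow> ((1 - real (character I D) / real TF) *\<^sub>R
                            ((1 / real N) *\<^sub>R (\<Sum>r<N. indicator_vec (A r)))) $ l"
    unfolding avg_success_frames[OF fr cf] by simp
qed

lemma independent_set_sequence_approx:
  fixes I :: "'l::finite \<Rightarrow> 'l set set"
  assumes "R \<in> rate_region I"
  obtains A :: "nat \<Rightarrow> 'l set"
  where "\<And>r. independent_set I (A r)"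
    and "\<And>l. real N * R $ l - 2 ^ CARD('l) \<le> (\<Sum>r<N. indicator_vec (A r) $ l)"
proof -
  define V where "V = {indicator_vec A :: real ^ 'l | A. independent_set I A}"
  have "finite V"
    unfolding V_def by simp
  have "card V \<le> CARD('l set)"
    unfolding V_def setcompr_eq_image by (rule order_trans[OF card_image_le card_mono]) auto
  then have card_V: "real (card V) \<le> 2 ^ CARD('l)"
    by (metis card_set of_nat_le_iff of_nat_numeral of_nat_power)
  have unit: "0 \<le> x $ l \<and> x $ l \<le> 1" if "x \<in> V" for x l
    using that unfolding V_def by auto
  have "0 \<in> V"
    unfolding V_def by (intro CollectI exI[of _ "{}"]) simp
  obtain m where "(\<Sum>x\<in>V. m x) \<le> N"
    and m: "\<And>l. real N * R $ l - real (card V) \<le> (\<Sum>x\<in>V. real (m x) * x $ l)"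
    using convex_hull_rounded_weights[OF \<open>finite V\<close> _ unit] assms
    unfolding rate_region_def V_def by blast
  moreover have "0 \<le> x $ l" if "x \<in> V" for x l
    using unit[OF that] by blast
  ultimately obtain F where F_V: "\<And>r. F r \<in> V"
    and F: "\<And>l. (\<Sum>x\<in>V. real (m x) * x $ l) \<le> (\<Sum>r<N. F r $ l)"
    using enumerate_multiplicities[OF \<open>finite V\<close> \<open>0 \<in> V\<close>] by blast
  have "\<forall>r. \<exists>A. independent_set I A \<and> F r = indicator_vec A"
    using F_V unfolding V_def by blast
  then obtain A where A: "\<forall>r. independent_set I (A r) \<and> F r = indicator_vec (A r)"
    by (rule choice[THEN exE])
  moreover have "real N * R $ l - 2 ^ CARD('l) \<le> (\<Sum>r<N. indicator_vec (A r) $ l)" for l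
  proof -
    have "(\<Sum>r<N. F r $ l) = (\<Sum>r<N. indicator_vec (A r) $ l)"
      using A by simp
    then show ?thesis
      using order_trans[OF m F, of l] card_V by linarith
  qed
  ultimately show ?thesis
    using that by blast
qed

lemma rate_region_approximable:
  fixes I :: "'l::finite \<Rightarrow> 'l set set" and D :: "'l \<Rightarrow> 'l \<Rightarrow> int"
  assumes "R \<in> rate_region I" and "\<epsilon> > 0"
  shows "\<exists>TF S. framed_schedule I D TF S \<and> collision_free I D S \<and> rate_exists I D S
           \<and> (\<forall>l. R $ l - \<epsilon> \<le> rate_vector I D S $ l)"
proof -
  define C :: real where "C = 2 ^ CARD('l)"
  define d where "d = character I D"
  define N where "N = nat \<lceil>(C + 1) / \<epsilon>\<rceil> + 1"
  have "N > 0"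
    unfolding N_def by simp
  have "(C + 1) / \<epsilon> < real N"
    unfolding N_def by linarith
  then have N_large: "C / real N + 1 / real N < \<epsilon>"
    using \<open>\<epsilon> > 0\<close> \<open>N > 0\<close> by (simp add: field_simps)
  obtain A where A: "\<And>r. independent_set I (A r)"
    and R: "\<And>l. real N * R $ l - C \<le> (\<Sum>r<N. indicator_vec (A r) $ l)"
    using independent_set_sequence_approx[OF assms(1)] unfolding C_def by blast
  define TF where "TF = (d + 1) * N"
  have TF: "d + 1 \<le> TF"
    unfolding TF_def using \<open>N > 0\<close> by (cases N) simp_all
  define S where "S = cyclic_schedule TF d N A"
  have rate: "rate_exists I D S \<and> rate_vector I D S
      = (1 - real d / real TF) *\<^sub>R ((1 / real N) *\<^sub>R (\<Sum>r<N. indicator_vec (A r)))"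
    unfolding S_def d_def by (rule rate_vector_cyclic_schedule[OF A \<open>N > 0\<close> TF[unfolded d_def]])
  have "real d / real TF \<le> real (d + 1) / real TF"
    by (simp add: divide_right_mono)
  also have "\<dots> = 1 / real N"
    unfolding TF_def of_nat_mult by (rule nonzero_divide_mult_cancel_left) simp
  finally have loss: "real d / real TF \<le> 1 / real N" .
  have "R $ l - \<epsilon> \<le> rate_vector I D S $ l" for l
  proof -
    define y where "y = (\<Sum>r<N. indicator_vec (A r) $ l) / real N"
    have "y \<le> 1"
      using sum_mono[of "{..<N}" "\<lambda>r. indicator_vec (A r) $ l" "\<lambda>_. 1"] \<open>N > 0\<close>
      unfolding y_def by simp
    have "(real N * R $ l - C) / real N \<le> y"
      using R[of l] unfolding y_def by (simp add: divide_right_mono)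
    then have "R $ l - C / real N \<le> y"
      using \<open>N > 0\<close> by (simp add: diff_divide_distrib)
    have "rate_vector I D S $ l = (1 - real d / real TF) * y"
      using rate unfolding y_def by simp
    also have "\<dots> \<ge> y - real d / real TF"
      using mult_left_mono[OF \<open>y \<le> 1\<close>, of "real d / real TF"] by (simp add: algebra_simps)
    finally show ?thesis
      using \<open>R $ l - C / real N \<le> y\<close> loss N_large by linarith
  qed
  moreover have "framed_schedule I D TF S" "collision_free I D S"
    unfolding S_def d_def using TF[unfolded d_def]
    by (simp_all add: framed_cyclic_schedule collision_free_cyclic_schedule A)
  ultimately show ?thesis
    using rate by blast
qed

theorem theorem3:
  fixes I :: "'l::finite \<Rightarrow> 'l set set" and D :: "'l \<Rightarrow> 'l \<Rightarrow> int"
  assumes "collision_sets_nonempty I"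
    and "binary_profile I"
  shows "(\<forall>TF S. framed_schedule I D TF S \<and> TF \<ge> 2 * character I D + 1
             \<and> collision_free I D S \<and> rate_exists I D S \<longrightarrow>
             rate_vector I D S \<in>
               (\<lambda>x. (1 - real (character I D) / real TF) *\<^sub>R x) ` rate_region I
             \<and> rate_vector I D S \<in> rate_region I)
       \<and> (\<forall>R \<in> rate_region I. \<forall>\<epsilon>>0. \<exists>TF S. framed_schedule I D TF S
             \<and> collision_free I D S \<and> rate_exists I D S
             \<and> (\<forall>l. rate_vector I D S $ l \<ge> R $ l - \<epsilon>))"
proof -
  have "rate_vector I D S \<in> (\<lambda>x. (1 - real (character I D) / real TF) *\<^sub>R x) ` rate_region I
      \<and> rate_vector I D S \<in> rate_region I"
    if schedule: "framed_schedule I D TF S" "2 * character I D + 1 \<le> TF"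
      "collision_free I D S" "rate_exists I D S" for TF S
  proof -
    obtain W where "W \<in> rate_region I"
      and "rate_vector I D S = (1 - real (character I D) / real TF) *\<^sub>R W"
      using rate_vector_framed_schedule[OF assms(2) schedule] by blast
    moreover have "0 \<le> 1 - real (character I D) / real TF"
      using schedule(2) by (simp add: field_simps)
    ultimately show ?thesis
      by (auto intro: scaleR_in_rate_region)
  qed
  then show ?thesis
    using rate_region_approximable by blast
qed

end
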